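(* Let $n\ge 2$. Then $\mathrm{Q}=\mathrm{A}\cap\mathrm{P}=\mathrm{B}\cap\mathrm{P}=\mathrm{A}\cap\mathrm{B}$. Moreover: <ul> <li>if $n\le 3$, then $\mathrm{Q}=\mathrm{P}=\mathrm{Z}^\times(\mathrm{C}^{\times(0)}\cup\mathrm{C}^{\times(1)})$;</li> <li>if $n=4$, then $\mathrm{Q}\ne\mathrm{P}$ and $\mathrm{A}\neq\mathrm{P}$.</li> </ul>
   Context: Let $\mathrm{C}$ be either the real Clifford algebra $C\ell_{p,q}$ with $p+q=n$, or the complex Clifford algebra $C\ell(\mathbb{C}^n)$. It has identity $e$ and generators $e_1,\dots,e_n$ satisfying $e_ae_b+e_be_a=2\eta_{ab}e$. In the real case $\eta=\mathrm{diag}(1,\dots,1,-1,\dots,-1)$ with $p$ entries $+1$ and $q$ entries $-1$. In the complex case $\eta=I_n$. $\mathrm{C}^k$ is the grade-$k$ subspace, spanned by the products $e_{a_1}\cdots e_{a_k}$ with $a_1<\dots<a_k$. The even subspace is $\mathrm{C}^{(0)}=\bigoplus_{k\text{ even}}\mathrm{C}^k$ and the odd subspace is $\mathrm{C}^{(1)}=\bigoplus_{k\text{ odd}}\mathrm{C}^k$. The grade involution $U\mapsto\hat U$ is the linear automorphism acting on $\mathrm{C}^k$ as $(-1)^k$. The reversion $U\mapsto\tilde U$ is the linear anti-automorphism acting on $\mathrm{C}^k$ as $(-1)^{k(k-1)/2}$. For $S\subseteq\mathrm{C}$, $S^\times$ is the set of elements of $S$ invertible in $\mathrm{C}$, and $\mathrm{C}^{\times(j)}:=(\mathrm{C}^{(j)})^\times$.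 $\mathrm{Z}$ is the center: $\mathrm{Z}=\mathrm{C}^0$ for $n$ even and $\mathrm{Z}=\mathrm{C}^0\oplus\mathrm{C}^n$ for $n$ odd. Define: <ul> <li>$\mathrm{P}:=\mathrm{Z}^\times(\mathrm{C}^{\times(0)}\cup\mathrm{C}^{\times(1)})=\{WT: W\in\mathrm{Z}^\times, T\in\mathrm{C}^{\times(0)}\cup\mathrm{C}^{\times(1)}\}$;</li> <li>$\mathrm{A}:=\{T\in\mathrm{C}^\times:\tilde TT\in\mathrm{Z}^\times\}$;</li> <li>$\mathrm{B}:=\{T\in\mathrm{C}^\times:\hat{\tilde T}T\in\mathrm{Z}^\times\}$;</li> <li>$\mathrm{Q}:=\{T\in\mathrm{P}:\tilde TT\in\mathrm{Z}^\times\}$.</li> </ul> *)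

theory Defs
  imports Complex_Main
begin

text \<open>
Clifford algebra over a field 'a with n generators e_0,...,e_{n-1} and diagonal
metric eta (e_i e_i = eta i).  An element is represented by its coefficient
function on blades: a blade e_A, A a subset of {0..<n}, stands for the ordered
product e_{a_1} ... e_{a_k}, a_1 < ... < a_k.
\<close>

type_synonym 'a clif = "nat set \<Rightarrow> 'a"

definition clif_carrier :: "nat \<Rightarrow> 'a::field clif set" where
  "clif_carrier n = {x. \<forall>A. \<not> A \<subseteq> {..<n} \<longrightarrow> x A = 0}"

text \<open>Coefficient of e_{A \<triangle> B} in the product e_A e_B.\<close>
definition blade_coeff :: "(nat \<Rightarrow> 'a::field) \<Rightarrow> nat set \<Rightarrow> nat set \<Rightarrow> 'a" where
  "blade_coeff eta A B =
     (-1) ^ card {(a, b). a \<in> A \<and> b \<in> B \<and> b < a} * (\<Prod>i\<in>A \<inter> B. eta i)"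

definition clif_mult :: "nat \<Rightarrow> (nat \<Rightarrow> 'a::field) \<Rightarrow> 'a clif \<Rightarrow> 'a clif \<Rightarrow> 'a clif" where
  "clif_mult n eta x y = (\<lambda>C. if C \<subseteq> {..<n} then
      (\<Sum>A\<in>Pow {..<n}. \<Sum>B\<in>Pow {..<n}.
         if (A - B) \<union> (B - A) = C then x A * y B * blade_coeff eta A B else 0)
    else 0)"

definition clif_one :: "'a::field clif" where
  "clif_one = (\<lambda>A. if A = {} then 1 else 0)"

definition clif_invertible :: "nat \<Rightarrow> (nat \<Rightarrow> 'a::field) \<Rightarrow> 'a clif \<Rightarrow> bool" where
  "clif_invertible n eta x \<longleftrightarrow> x \<in> clif_carrier n \<and>
     (\<exists>y \<in> clif_carrier n. clif_mult n eta x y = clif_one \<and> clif_mult n eta y x = clif_one)"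

definition clif_units :: "nat \<Rightarrow> (nat \<Rightarrow> 'a::field) \<Rightarrow> 'a clif set \<Rightarrow> 'a clif set" where
  "clif_units n eta S = {x \<in> S. clif_invertible n eta x}"

definition clif_hat :: "'a::field clif \<Rightarrow> 'a clif" where
  "clif_hat x = (\<lambda>A. (-1) ^ card A * x A)"

definition clif_rev :: "'a::field clif \<Rightarrow> 'a clif" where
  "clif_rev x = (\<lambda>A. (-1) ^ (card A * (card A - 1) div 2) * x A)"

definition clif_even :: "nat \<Rightarrow> 'a::field clif set" where
  "clif_even n = {x \<in> clif_carrier n. \<forall>A. x A \<noteq> 0 \<longrightarrow> even (card A)}"

definition clif_odd :: "nat \<Rightarrow> 'a::field clif set" where
  "clif_odd n = {x \<in> clif_carrier n. \<forall>A. x A \<noteq> 0 \<longrightarrow> odd (card A)}"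

definition clif_Z :: "nat \<Rightarrow> 'a::field clif set" where
  "clif_Z n = {x \<in> clif_carrier n. \<forall>A. x A \<noteq> 0 \<longrightarrow> A = {} \<or> (odd n \<and> A = {..<n})}"

definition clif_P :: "nat \<Rightarrow> (nat \<Rightarrow> 'a::field) \<Rightarrow> 'a clif set" where
  "clif_P n eta = {clif_mult n eta W T | W T.
      W \<in> clif_units n eta (clif_Z n) \<and>
      T \<in> clif_units n eta (clif_even n) \<union> clif_units n eta (clif_odd n)}"

definition clif_A :: "nat \<Rightarrow> (nat \<Rightarrow> 'a::field) \<Rightarrow> 'a clif set" where
  "clif_A n eta = {T \<in> clif_units n eta (clif_carrier n).
      clif_mult n eta (clif_rev T) T \<in> clif_units n eta (clif_Z n)}"

definition clif_B :: "nat \<Rightarrow> (nat \<Rightarrow> 'a::field) \<Rightarrow> 'a clif set" where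
  "clif_B n eta = {T \<in> clif_units n eta (clif_carrier n).
      clif_mult n eta (clif_hat (clif_rev T)) T \<in> clif_units n eta (clif_Z n)}"

definition clif_Q :: "nat \<Rightarrow> (nat \<Rightarrow> 'a::field) \<Rightarrow> 'a clif set" where
  "clif_Q n eta = {T \<in> clif_P n eta.
      clif_mult n eta (clif_rev T) T \<in> clif_units n eta (clif_Z n)}"

definition real_sig :: "nat \<Rightarrow> nat \<Rightarrow> real" where
  "real_sig p i = (if i < p then 1 else -1)"

end

theory Submission
  imports Defs "HOL-Library.Function_Algebras"
begin

(*
  The paper's centre Z is spanned by 1 and, for odd n, the pseudoscalar I; as an algebra it is
  a + b I with I^2 = s = +-1, and a + b I is a unit iff a^2 - s b^2 is nonzero.

  For T = W T' in P (W a central unit, T' an even or odd unit), both rev(T) T and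
  hat(rev T) T are central units times the same element rev(T') T', so one is a central unit
  iff the other is: Q = A \<inter> P = B \<inter> P.  Conversely, let rev(T) T and hat(rev T) T be central
  units and split rev T = R0 + R1 into even and odd parts.  Then R0 T and R1 T are central; if
  one of them is a unit, T is a central unit times the inverse of R0 or R1, so T is in P.
  Otherwise both are central non-units, and multiplying by the conjugate a - b I shows that
  a homogeneous multiple of a central non-unit vanishes, so rev T = 0, which is absurd.

  For n \<le> 3 the element rev(T') T' is even and reversion-invariant, hence a scalar, so Q = P.
  For n = 4 the even unit T = 1 + 2 I has rev(T) T = (1 + 4 s) + 4 I, which is not central.
*)

section \<open>Signs of products of blades\<close>

definition inversions :: "nat set \<Rightarrow> nat set \<Rightarrow> nat" where
  "inversions A B = card {(a, b). a \<in> A \<and> b \<in> B \<and> b < a}"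

lemma blade_coeff_eq: "blade_coeff eta A B = (-1) ^ inversions A B * (\<Prod>i\<in>A \<inter> B. eta i)"
  by (simp add: blade_coeff_def inversions_def)

lemma finite_inversion_pairs:
  "finite A \<Longrightarrow> finite B \<Longrightarrow> finite {(a, b). a \<in> A \<and> b \<in> B \<and> b < a}"
  by (rule finite_subset[of _ "A \<times> B"]) auto

lemma inversions_Un_left:
  assumes "finite A" "finite B" "finite C" "A \<inter> B = {}"
  shows "inversions (A \<union> B) C = inversions A C + inversions B C"
proof -
  have "{(a, c). a \<in> A \<union> B \<and> c \<in> C \<and> c < a} =
      {(a, c). a \<in> A \<and> c \<in> C \<and> c < a} \<union> {(a, c). a \<in> B \<and> c \<in> C \<and> c < a}" by auto
  then show ?thesis
    unfolding inversions_def using assms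
    by (simp add: card_Un_disjoint finite_inversion_pairs disjoint_iff)
qed

lemma inversions_Un_right:
  assumes "finite A" "finite B" "finite C" "A \<inter> B = {}"
  shows "inversions C (A \<union> B) = inversions C A + inversions C B"
proof -
  have "{(c, b). c \<in> C \<and> b \<in> A \<union> B \<and> b < c} =
      {(c, b). c \<in> C \<and> b \<in> A \<and> b < c} \<union> {(c, b). c \<in> C \<and> b \<in> B \<and> b < c}" by auto
  then show ?thesis
    unfolding inversions_def using assms
    by (simp add: card_Un_disjoint finite_inversion_pairs disjoint_iff)
qed

lemma neg_one_power_eq_if_even_add: "even (x + y) \<Longrightarrow> (-1::'a::ring_1) ^ x = (-1) ^ y"
  by (auto simp: minus_one_power_iff)

lemma neg_one_power_eq_if_add_double:
  "x + 2 * y = u + v \<Longrightarrow> (-1::'a::ring_1) ^ x = (-1) ^ u * (-1) ^ v"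
proof -
  assume "x + 2 * y = u + v"
  then have "(-1::'a) ^ x = (-1) ^ (u + v)" by (intro neg_one_power_eq_if_even_add) presburger
  then show ?thesis by (simp add: power_add)
qed

lemma neg_one_power_inversions_sym_diff_left:
  assumes "finite A" "finite B" "finite C"
  shows "(-1::'a::ring_1) ^ inversions (sym_diff A B) C = (-1) ^ inversions A C * (-1) ^ inversions B C"
proof (rule neg_one_power_eq_if_add_double)
  have "A = (A - B) \<union> (A \<inter> B)" "B = (B - A) \<union> (A \<inter> B)" by auto
  then have "inversions A C = inversions (A - B) C + inversions (A \<inter> B) C"
    "inversions B C = inversions (B - A) C + inversions (A \<inter> B) C"
    using assms by (metis inversions_Un_left finite_Diff finite_Int Int_Diff_disjoint Int_commute)+
  moreover have "inversions (sym_diff A B) C = inversions (A - B) C + inversions (B - A) C"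
    using assms by (intro inversions_Un_left) auto
  ultimately show "inversions (sym_diff A B) C + 2 * inversions (A \<inter> B) C = inversions A C + inversions B C"
    by simp
qed

lemma neg_one_power_inversions_sym_diff_right:
  assumes "finite A" "finite B" "finite C"
  shows "(-1::'a::ring_1) ^ inversions C (sym_diff A B) = (-1) ^ inversions C A * (-1) ^ inversions C B"
proof (rule neg_one_power_eq_if_add_double)
  have "A = (A - B) \<union> (A \<inter> B)" "B = (B - A) \<union> (A \<inter> B)" by auto
  then have "inversions C A = inversions C (A - B) + inversions C (A \<inter> B)"
    "inversions C B = inversions C (B - A) + inversions C (A \<inter> B)"
    using assms by (metis inversions_Un_right finite_Diff finite_Int Int_Diff_disjoint Int_commute)+
  moreover have "inversions C (sym_diff A B) = inversions C (A - B) + inversions C (B - A)"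
    using assms by (intro inversions_Un_right) auto
  ultimately show "inversions C (sym_diff A B) + 2 * inversions C (A \<inter> B) = inversions C A + inversions C B"
    by simp
qed

lemma inversions_swap:
  assumes "finite A" "finite B"
  shows "inversions A B + inversions B A + card (A \<inter> B) = card A * card B"
proof -
  let ?X = "{(a, b). a \<in> A \<and> b \<in> B \<and> b < a}"
  let ?Y = "{(a, b). a \<in> A \<and> b \<in> B \<and> a < b}"
  let ?D = "{(a, b). a \<in> A \<and> b \<in> B \<and> a = b}"
  have fin: "finite ?X" "finite ?Y" "finite ?D"
    by (rule finite_subset[of _ "A \<times> B"], use assms in auto)+
  have "A \<times> B = ?X \<union> ?Y \<union> ?D" by auto
  then have "card (A \<times> B) = card ?X + card ?Y + card ?D"
    using fin by (simp add: card_Un_disjoint disjoint_iff)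
  moreover have "card ?Y = inversions B A"
    unfolding inversions_def
    by (rule bij_betw_same_card[of "\<lambda>(a, b). (b, a)"]) (auto simp: bij_betw_def inj_on_def image_def)
  moreover have "card ?D = card (A \<inter> B)"
    by (rule bij_betw_same_card[of "\<lambda>(a, b). a"]) (auto simp: bij_betw_def inj_on_def image_def)
  ultimately show ?thesis by (simp add: inversions_def card_cartesian_product)
qed

lemma prod_metric_assoc:
  fixes eta :: "nat \<Rightarrow> 'a::comm_monoid_mult"
  assumes "finite X" "finite Y" "finite Z"
  shows "(\<Prod>i\<in>X \<inter> Y. eta i) * (\<Prod>i\<in>sym_diff X Y \<inter> Z. eta i) =
         (\<Prod>i\<in>Y \<inter> Z. eta i) * (\<Prod>i\<in>X \<inter> sym_diff Y Z. eta i)"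
proof -
  have "(X \<inter> Y) \<union> (sym_diff X Y \<inter> Z) = (Y \<inter> Z) \<union> (X \<inter> sym_diff Y Z)" by blast
  moreover have "(\<Prod>i\<in>X \<inter> Y. eta i) * (\<Prod>i\<in>sym_diff X Y \<inter> Z. eta i) =
      (\<Prod>i\<in>(X \<inter> Y) \<union> (sym_diff X Y \<inter> Z). eta i)"
    "(\<Prod>i\<in>Y \<inter> Z. eta i) * (\<Prod>i\<in>X \<inter> sym_diff Y Z. eta i) = (\<Prod>i\<in>(Y \<inter> Z) \<union> (X \<inter> sym_diff Y Z). eta i)"
    by (rule prod.union_disjoint[symmetric], use assms in auto)+
  ultimately show ?thesis by simp
qed

lemma blade_coeff_assoc:
  assumes "finite X" "finite Y" "finite Z"
  shows "blade_coeff eta X Y * blade_coeff eta (sym_diff X Y) Z =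
         blade_coeff eta Y Z * blade_coeff eta X (sym_diff Y Z)"
  using prod_metric_assoc[OF assms, of eta]
  unfolding blade_coeff_eq neg_one_power_inversions_sym_diff_left[OF assms(1,2,3)]
    neg_one_power_inversions_sym_diff_right[OF assms(2,3,1)]
  by (simp add: algebra_simps)

section \<open>The Clifford product\<close>

lemma clif_mult_apply:
  assumes "C \<subseteq> {..<n}"
  shows "clif_mult n eta x y C =
    (\<Sum>A\<in>Pow {..<n}. x A * y (sym_diff A C) * blade_coeff eta A (sym_diff A C))"
proof -
  have "(\<Sum>B\<in>Pow {..<n}. if sym_diff A B = C then x A * y B * blade_coeff eta A B else 0)
      = x A * y (sym_diff A C) * blade_coeff eta A (sym_diff A C)" if "A \<subseteq> {..<n}" for A
  proof -
    have "\<And>B. sym_diff A B = C \<longleftrightarrow> B = sym_diff A C" by blast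
    moreover have "sym_diff A C \<in> Pow {..<n}" using that assms by auto
    ultimately show ?thesis by simp
  qed
  then show ?thesis using assms unfolding clif_mult_def by simp
qed

lemma clif_mult_outside: "\<not> C \<subseteq> {..<n} \<Longrightarrow> clif_mult n eta x y C = 0"
  by (simp add: clif_mult_def)

lemma sum_Pow_sym_diff_reindex:
  assumes "A \<subseteq> {..<n}"
  shows "(\<Sum>B\<in>Pow {..<n}. f (sym_diff A B)) = (\<Sum>B\<in>Pow {..<n}. f B)"
  by (rule sum.reindex_bij_witness[of _ "sym_diff A" "sym_diff A"]) (use assms in auto)

lemma finite_subset_lessThan: "A \<subseteq> {..<n::nat} \<Longrightarrow> finite A"
  using finite_subset by blast

lemma clif_mult_mult_left_apply:
  assumes D: "D \<subseteq> {..<n}"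
  shows "clif_mult n eta (clif_mult n eta x y) z D =
    (\<Sum>A\<in>Pow {..<n}. \<Sum>B\<in>Pow {..<n}. x A * y (sym_diff A B) * z (sym_diff B D) *
      (blade_coeff eta A (sym_diff A B) * blade_coeff eta B (sym_diff B D)))"
proof -
  let ?c = "blade_coeff eta" and ?P = "Pow {..<n}"
  have "clif_mult n eta (clif_mult n eta x y) z D =
      (\<Sum>B\<in>?P. (\<Sum>A\<in>?P. x A * y (sym_diff A B) * ?c A (sym_diff A B)) * z (sym_diff B D) * ?c B (sym_diff B D))"
    unfolding clif_mult_apply[OF D] by (intro sum.cong refl) (simp add: clif_mult_apply)
  also have "\<dots> = (\<Sum>B\<in>?P. \<Sum>A\<in>?P. x A * y (sym_diff A B) * z (sym_diff B D) *
      (?c A (sym_diff A B) * ?c B (sym_diff B D)))"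
    unfolding sum_distrib_right by (intro sum.cong refl) (simp add: mult_ac)
  also have "\<dots> = (\<Sum>A\<in>?P. \<Sum>B\<in>?P. x A * y (sym_diff A B) * z (sym_diff B D) *
      (?c A (sym_diff A B) * ?c B (sym_diff B D)))"
    by (rule sum.swap)
  finally show ?thesis .
qed

lemma clif_mult_mult_right_apply:
  assumes D: "D \<subseteq> {..<n}"
  shows "clif_mult n eta x (clif_mult n eta y z) D =
    (\<Sum>A\<in>Pow {..<n}. \<Sum>B\<in>Pow {..<n}. x A * y (sym_diff A B) * z (sym_diff B D) *
      (blade_coeff eta (sym_diff A B) (sym_diff B D) * blade_coeff eta A (sym_diff A D)))"
  unfolding clif_mult_apply[OF D]
proof (intro sum.cong refl)
  fix A assume "A \<in> Pow {..<n}"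
  then have A: "A \<subseteq> {..<n}" and AD: "sym_diff A D \<subseteq> {..<n}" using D by auto
  let ?f = "\<lambda>B. y B * z (sym_diff B (sym_diff A D)) * blade_coeff eta B (sym_diff B (sym_diff A D))"
  have "\<And>B. sym_diff (sym_diff A B) (sym_diff A D) = sym_diff B D" by blast
  then have "clif_mult n eta y z (sym_diff A D) = (\<Sum>B\<in>Pow {..<n}.
      y (sym_diff A B) * z (sym_diff B D) * blade_coeff eta (sym_diff A B) (sym_diff B D))"
    unfolding clif_mult_apply[OF AD] sum_Pow_sym_diff_reindex[OF A, of ?f, symmetric] by simp
  then show "x A * clif_mult n eta y z (sym_diff A D) * blade_coeff eta A (sym_diff A D) =
    (\<Sum>B\<in>Pow {..<n}. x A * y (sym_diff A B) * z (sym_diff B D) *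
      (blade_coeff eta (sym_diff A B) (sym_diff B D) * blade_coeff eta A (sym_diff A D)))"
    by (simp add: sum_distrib_left sum_distrib_right mult_ac)
qed

lemma clif_mult_assoc:
  "clif_mult n eta (clif_mult n eta x y) z = clif_mult n eta x (clif_mult n eta y z)"
proof
  fix D
  show "clif_mult n eta (clif_mult n eta x y) z D = clif_mult n eta x (clif_mult n eta y z) D"
  proof (cases "D \<subseteq> {..<n}")
    case D: True
    show ?thesis
      unfolding clif_mult_mult_left_apply[OF D] clif_mult_mult_right_apply[OF D]
    proof (intro sum.cong refl)
      fix A B assume "A \<in> Pow {..<n}" "B \<in> Pow {..<n}"
      then have fin: "finite A" "finite (sym_diff A B)" "finite (sym_diff B D)"
        using D by (auto intro: finite_subset_lessThan)
      have "sym_diff A (sym_diff A B) = B" "sym_diff (sym_diff A B) (sym_diff B D) = sym_diff A D"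
        by blast+
      with blade_coeff_assoc[OF fin, of eta]
      show "x A * y (sym_diff A B) * z (sym_diff B D) *
          (blade_coeff eta A (sym_diff A B) * blade_coeff eta B (sym_diff B D)) =
        x A * y (sym_diff A B) * z (sym_diff B D) *
          (blade_coeff eta (sym_diff A B) (sym_diff B D) * blade_coeff eta A (sym_diff A D))"
        by simp
    qed
  qed (simp add: clif_mult_outside)
qed

lemma clif_one_mult: "x \<in> clif_carrier n \<Longrightarrow> clif_mult n eta clif_one x = x"
proof
  fix C assume x: "x \<in> clif_carrier n"
  show "clif_mult n eta clif_one x C = x C"
  proof (cases "C \<subseteq> {..<n}")
    case True
    then have "clif_mult n eta clif_one x C =
        (\<Sum>A\<in>Pow {..<n}. if A = {} then x (sym_diff A C) * blade_coeff eta A (sym_diff A C) else 0)"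
      unfolding clif_mult_apply[OF True] by (intro sum.cong refl) (simp add: clif_one_def)
    then show ?thesis by (simp add: blade_coeff_eq inversions_def)
  qed (use x in \<open>simp add: clif_mult_outside clif_carrier_def\<close>)
qed

lemma clif_mult_one: "x \<in> clif_carrier n \<Longrightarrow> clif_mult n eta x clif_one = x"
proof
  fix C assume x: "x \<in> clif_carrier n"
  show "clif_mult n eta x clif_one C = x C"
  proof (cases "C \<subseteq> {..<n}")
    case True
    have "sym_diff A C = {} \<longleftrightarrow> A = C" for A :: "nat set" by blast
    then have "clif_mult n eta x clif_one C =
        (\<Sum>A\<in>Pow {..<n}. if A = C then x A * blade_coeff eta A (sym_diff A C) else 0)"
      unfolding clif_mult_apply[OF True] by (intro sum.cong refl) (simp add: clif_one_def)
    then show ?thesis using True by (simp add: blade_coeff_eq inversions_def)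
  qed (use x in \<open>simp add: clif_mult_outside clif_carrier_def\<close>)
qed

definition clif_scale :: "'a::field \<Rightarrow> 'a clif \<Rightarrow> 'a clif" where
  "clif_scale k x = (\<lambda>A. k * x A)"

lemma clif_scale_scale: "clif_scale k (clif_scale m x) = clif_scale (k * m) x"
  by (simp add: clif_scale_def fun_eq_iff)

lemma clif_scale_one [simp]: "clif_scale 1 x = x"
  by (simp add: clif_scale_def)

lemma clif_scale_zero_left [simp]: "clif_scale 0 x = 0"
  and clif_scale_zero_right [simp]: "clif_scale k 0 = 0"
  by (simp_all add: clif_scale_def fun_eq_iff)

lemma clif_scale_minus_one: "clif_scale (-1) x = - x"
  by (simp add: clif_scale_def fun_eq_iff)

lemma clif_mult_eq:
  "clif_mult n eta x y C = (if C \<subseteq> {..<n} then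
    \<Sum>A\<in>Pow {..<n}. x A * y (sym_diff A C) * blade_coeff eta A (sym_diff A C) else 0)"
  by (simp add: clif_mult_apply clif_mult_outside)

lemma clif_mult_add_left: "clif_mult n eta (x + y) z = clif_mult n eta x z + clif_mult n eta y z"
  and clif_mult_add_right: "clif_mult n eta z (x + y) = clif_mult n eta z x + clif_mult n eta z y"
  and clif_mult_diff_left: "clif_mult n eta (x - y) z = clif_mult n eta x z - clif_mult n eta y z"
  and clif_mult_minus_left: "clif_mult n eta (- x) y = - clif_mult n eta x y"
  and clif_mult_minus_right: "clif_mult n eta x (- y) = - clif_mult n eta x y"
  and clif_mult_scale_left: "clif_mult n eta (clif_scale k x) y = clif_scale k (clif_mult n eta x y)"
  and clif_mult_scale_right: "clif_mult n eta x (clif_scale k y) = clif_scale k (clif_mult n eta x y)"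
  by (simp_all add: fun_eq_iff clif_mult_eq clif_scale_def algebra_simps
      sum.distrib sum_subtractf sum_negf sum_distrib_left)

lemma clif_mult_zero_left [simp]: "clif_mult n eta 0 y = 0"
  and clif_mult_zero_right [simp]: "clif_mult n eta x 0 = 0"
  by (simp_all add: fun_eq_iff clif_mult_eq)

section \<open>Reversion and grade involution\<close>

lemma Suc_choose_two: "Suc m choose 2 = (m choose 2) + m"
  by (simp add: numeral_2_eq_2)

lemma add_choose_two: "(x + y) choose 2 = (x choose 2) + (y choose 2) + x * y"
  by (induction y) (simp_all add: Suc_choose_two)

lemma double_choose_two: "2 * (k choose 2) + k = k * k"
  by (induction k) (simp_all add: Suc_choose_two)

lemma blade_coeff_reverse:
  assumes fin: "finite A" "finite B"
  shows "(-1) ^ (card (sym_diff A B) choose 2) * blade_coeff eta A B =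
         (-1) ^ (card A choose 2) * (-1) ^ (card B choose 2) * blade_coeff eta B A"
proof -
  define k a b where "k = card (A \<inter> B)" and "a = card (A - B)" and "b = card (B - A)"
  have cA: "card A = k + a" and cB: "card B = k + b"
    unfolding k_def a_def b_def using card_Int_Diff[OF fin(1), of B] card_Int_Diff[OF fin(2), of A]
    by (simp_all add: Int_commute)
  have cS: "card (sym_diff A B) = a + b"
    unfolding a_def b_def using fin by (intro card_Un_disjoint) auto
  have "inversions A B + inversions B A + k = (k + a) * (k + b)"
    using inversions_swap[OF fin] cA cB k_def by simp
  then have "(a + b choose 2) + inversions A B + ((k + a choose 2) + (k + b choose 2) + inversions B A) + k
      = 2 * ((a choose 2) + (b choose 2) + a * b + 2 * (k choose 2) + k * a + k * b) + k"
    using double_choose_two[of k] unfolding add_choose_two by (simp add: algebra_simps)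
  then have "even ((a + b choose 2) + inversions A B + ((k + a choose 2) + (k + b choose 2) + inversions B A))"
    by presburger
  then have "(-1::'a) ^ ((a + b choose 2) + inversions A B) =
      (-1) ^ ((k + a choose 2) + (k + b choose 2) + inversions B A)"
    by (rule neg_one_power_eq_if_even_add)
  then have "(-1::'a) ^ (a + b choose 2) * (-1) ^ inversions A B =
      (-1) ^ (k + a choose 2) * (-1) ^ (k + b choose 2) * (-1) ^ inversions B A"
    by (simp add: power_add)
  then show ?thesis unfolding blade_coeff_eq cA cB cS by (simp add: Int_commute mult_ac)
qed

lemma card_sym_diff:
  "finite A \<Longrightarrow> finite B \<Longrightarrow> card (sym_diff A B) + 2 * card (A \<inter> B) = card A + card B"
  using card_Int_Diff[of A B] card_Int_Diff[of B A] card_Un_disjoint[of "A - B" "B - A"]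
  by (auto simp: Int_commute)

lemma clif_rev_eq: "clif_rev x = (\<lambda>A. (-1) ^ (card A choose 2) * x A)"
  by (simp add: clif_rev_def choose_two)

lemma clif_rev_mult: "clif_rev (clif_mult n eta x y) = clif_mult n eta (clif_rev y) (clif_rev x)"
proof
  fix C
  show "clif_rev (clif_mult n eta x y) C = clif_mult n eta (clif_rev y) (clif_rev x) C"
  proof (cases "C \<subseteq> {..<n}")
    case C: True
    let ?c = "blade_coeff eta" and ?s = "\<lambda>A. (-1::'a) ^ (card A choose 2)"
    have "clif_mult n eta (clif_rev y) (clif_rev x) C =
       (\<Sum>B\<in>Pow {..<n}. ?s B * y B * (?s (sym_diff B C) * x (sym_diff B C)) * ?c B (sym_diff B C))"
      unfolding clif_mult_apply[OF C] clif_rev_eq by simp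
    also have "\<dots> = (\<Sum>A\<in>Pow {..<n}. ?s (sym_diff C A) * y (sym_diff C A) *
        (?s (sym_diff (sym_diff C A) C) * x (sym_diff (sym_diff C A) C)) * ?c (sym_diff C A) (sym_diff (sym_diff C A) C))"
      by (rule sum_Pow_sym_diff_reindex[OF C, symmetric])
    also have "\<dots> = (\<Sum>A\<in>Pow {..<n}. ?s C * (x A * y (sym_diff A C) * ?c A (sym_diff A C)))"
    proof (intro sum.cong refl)
      fix A assume "A \<in> Pow {..<n}"
      then have fin: "finite A" "finite (sym_diff A C)" using C by (auto intro: finite_subset_lessThan)
      have eqs: "sym_diff C A = sym_diff A C" "sym_diff (sym_diff A C) C = A" "sym_diff A (sym_diff A C) = C"
        by blast+
      show "?s (sym_diff C A) * y (sym_diff C A) * (?s (sym_diff (sym_diff C A) C) * x (sym_diff (sym_diff C A) C)) *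
          ?c (sym_diff C A) (sym_diff (sym_diff C A) C) = ?s C * (x A * y (sym_diff A C) * ?c A (sym_diff A C))"
        using blade_coeff_reverse[OF fin, of eta] unfolding eqs by (simp add: mult_ac)
    qed
    also have "\<dots> = clif_rev (clif_mult n eta x y) C"
      unfolding clif_rev_eq clif_mult_apply[OF C] by (simp add: sum_distrib_left)
    finally show ?thesis ..
  qed (simp add: clif_mult_outside clif_rev_eq)
qed

lemma clif_hat_mult: "clif_hat (clif_mult n eta x y) = clif_mult n eta (clif_hat x) (clif_hat y)"
proof
  fix C
  show "clif_hat (clif_mult n eta x y) C = clif_mult n eta (clif_hat x) (clif_hat y) C"
  proof (cases "C \<subseteq> {..<n}")
    case C: True
    show ?thesis unfolding clif_hat_def clif_mult_apply[OF C] sum_distrib_left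
    proof (intro sum.cong refl)
      fix A assume "A \<in> Pow {..<n}"
      then have fin: "finite A" "finite (sym_diff A C)" using C by (auto intro: finite_subset_lessThan)
      have "sym_diff A (sym_diff A C) = C" by blast
      then have "(-1::'a) ^ card C = (-1) ^ card A * (-1) ^ card (sym_diff A C)"
        using neg_one_power_eq_if_add_double[OF card_sym_diff[OF fin]] by simp
      then show "(-1) ^ card C * (x A * y (sym_diff A C) * blade_coeff eta A (sym_diff A C)) =
         (-1) ^ card A * x A * ((-1) ^ card (sym_diff A C) * y (sym_diff A C)) * blade_coeff eta A (sym_diff A C)"
        by (simp add: mult_ac)
    qed
  qed (simp add: clif_mult_outside clif_hat_def)
qed

lemma clif_rev_rev [simp]: "clif_rev (clif_rev x) = x"
  by (simp add: clif_rev_eq fun_eq_iff flip: power_mult_distrib)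

lemma clif_hat_rev: "clif_hat (clif_rev x) = clif_rev (clif_hat x)"
  and clif_rev_add: "clif_rev (x + y) = clif_rev x + clif_rev y"
  and clif_rev_minus: "clif_rev (- x) = - clif_rev x"
  and clif_rev_scale: "clif_rev (clif_scale k x) = clif_scale k (clif_rev x)"
  and clif_hat_add: "clif_hat (x + y) = clif_hat x + clif_hat y"
  and clif_hat_scale: "clif_hat (clif_scale k x) = clif_scale k (clif_hat x)"
  by (simp_all add: fun_eq_iff clif_rev_eq clif_hat_def clif_scale_def algebra_simps)

lemma clif_rev_one [simp]: "clif_rev clif_one = clif_one"
  and clif_hat_one [simp]: "clif_hat clif_one = clif_one"
  by (simp_all add: fun_eq_iff clif_rev_def clif_hat_def clif_one_def)

lemma clif_one_neq_zero [simp]: "clif_one \<noteq> 0"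
  by (simp add: clif_one_def fun_eq_iff)

lemma clif_carrier_mult [simp]: "clif_mult n eta x y \<in> clif_carrier n"
  and clif_carrier_one [simp]: "clif_one \<in> clif_carrier n"
  and clif_carrier_zero [simp]: "0 \<in> clif_carrier n"
  and clif_carrier_add [simp]: "x \<in> clif_carrier n \<Longrightarrow> y \<in> clif_carrier n \<Longrightarrow> x + y \<in> clif_carrier n"
  and clif_carrier_minus [simp]: "x \<in> clif_carrier n \<Longrightarrow> - x \<in> clif_carrier n"
  and clif_carrier_scale [simp]: "x \<in> clif_carrier n \<Longrightarrow> clif_scale k x \<in> clif_carrier n"
  and clif_carrier_rev [simp]: "x \<in> clif_carrier n \<Longrightarrow> clif_rev x \<in> clif_carrier n"
  and clif_carrier_hat [simp]: "x \<in> clif_carrier n \<Longrightarrow> clif_hat x \<in> clif_carrier n"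
  by (simp_all add: clif_carrier_def clif_mult_outside clif_one_def clif_scale_def clif_rev_def clif_hat_def)

definition clif_even_part :: "'a::field clif \<Rightarrow> 'a clif" where
  "clif_even_part x = (\<lambda>A. if even (card A) then x A else 0)"

definition clif_odd_part :: "'a::field clif \<Rightarrow> 'a clif" where
  "clif_odd_part x = (\<lambda>A. if odd (card A) then x A else 0)"

lemma clif_even_part_add_odd_part: "clif_even_part x + clif_odd_part x = x"
  and clif_hat_even_part: "clif_hat (clif_even_part x) = clif_even_part x"
  and clif_hat_odd_part: "clif_hat (clif_odd_part x) = - clif_odd_part x"
  by (simp_all add: clif_even_part_def clif_odd_part_def clif_hat_def fun_eq_iff)

lemma clif_carrier_even_part [simp]: "x \<in> clif_carrier n \<Longrightarrow> clif_even_part x \<in> clif_carrier n"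
  and clif_carrier_odd_part [simp]: "x \<in> clif_carrier n \<Longrightarrow> clif_odd_part x \<in> clif_carrier n"
  by (simp_all add: clif_even_part_def clif_odd_part_def clif_carrier_def)

lemma even_if_neg_one_power_mult_eq: "(-1::'a::field_char_0) ^ k * c = c \<Longrightarrow> c \<noteq> 0 \<Longrightarrow> even k"
  by (auto simp: minus_one_power_iff split: if_splits)

lemma clif_even_iff_hat:
  "x \<in> clif_even n \<longleftrightarrow> x \<in> clif_carrier n \<and> clif_hat x = (x :: 'a::field_char_0 clif)"
  by (auto simp: clif_even_def clif_hat_def fun_eq_iff minus_one_power_iff)

lemma clif_odd_iff_hat:
  "x \<in> clif_odd n \<longleftrightarrow> x \<in> clif_carrier n \<and> clif_hat x = - (x :: 'a::field_char_0 clif)"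
  by (auto simp: clif_odd_def clif_hat_def fun_eq_iff minus_one_power_iff)

section \<open>Units\<close>

definition clif_inverse :: "nat \<Rightarrow> (nat \<Rightarrow> 'a::field) \<Rightarrow> 'a clif \<Rightarrow> 'a clif" where
  "clif_inverse n eta x =
    (SOME y. y \<in> clif_carrier n \<and> clif_mult n eta x y = clif_one \<and> clif_mult n eta y x = clif_one)"

locale clifford =
  fixes n :: nat and eta :: "nat \<Rightarrow> 'a::field_char_0"
begin

abbreviation mult :: "'a clif \<Rightarrow> 'a clif \<Rightarrow> 'a clif" (infixl "\<odot>" 70)
  where "x \<odot> y \<equiv> clif_mult n eta x y"

abbreviation invertible :: "'a clif \<Rightarrow> bool"
  where "invertible \<equiv> clif_invertible n eta"

abbreviation cinv :: "'a clif \<Rightarrow> 'a clif"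
  where "cinv \<equiv> clif_inverse n eta"

lemma cinv_inverse:
  assumes "invertible x"
  shows "cinv x \<in> clif_carrier n" "x \<odot> cinv x = clif_one" "cinv x \<odot> x = clif_one"
proof -
  have "\<exists>y. y \<in> clif_carrier n \<and> x \<odot> y = clif_one \<and> y \<odot> x = clif_one"
    using assms unfolding clif_invertible_def by blast
  then have "cinv x \<in> clif_carrier n \<and> x \<odot> cinv x = clif_one \<and> cinv x \<odot> x = clif_one"
    unfolding clif_inverse_def by (rule someI_ex)
  then show "cinv x \<in> clif_carrier n" "x \<odot> cinv x = clif_one" "cinv x \<odot> x = clif_one" by simp_all
qed

lemma invertible_carrier: "invertible x \<Longrightarrow> x \<in> clif_carrier n"
  by (simp add: clif_invertible_def)

lemma invertibleI:
  "x \<in> clif_carrier n \<Longrightarrow> y \<in> clif_carrier n \<Longrightarrow> x \<odot> y = clif_one \<Longrightarrow> y \<odot> x = clif_one \<Longrightarrow> invertible x"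
  unfolding clif_invertible_def by blast

lemma mult_cancel_right:
  assumes "invertible t" "x \<in> clif_carrier n" "x \<odot> t = y"
  shows "x = y \<odot> cinv t"
  using cinv_inverse[OF assms(1)] assms(2,3) by (metis clif_mult_assoc clif_mult_one)

lemma mult_cancel_left:
  assumes "invertible t" "x \<in> clif_carrier n" "t \<odot> x = y"
  shows "x = cinv t \<odot> y"
  using cinv_inverse[OF assms(1)] assms(2,3) by (metis clif_mult_assoc clif_one_mult)

lemma cinv_unique: "invertible x \<Longrightarrow> y \<in> clif_carrier n \<Longrightarrow> x \<odot> y = clif_one \<Longrightarrow> y = cinv x"
  using mult_cancel_left[of x y clif_one] cinv_inverse[of x] by (simp add: clif_mult_one)

lemma invertible_one: "invertible clif_one"
  by (rule invertibleI[of _ clif_one]) (simp_all add: clif_one_mult)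

lemma not_invertible_zero: "\<not> invertible 0"
  using cinv_inverse(2)[of 0] by auto

lemma invertible_mult:
  assumes x: "invertible x" and y: "invertible y"
  shows "invertible (x \<odot> y)"
proof (rule invertibleI[of _ "cinv y \<odot> cinv x"])
  have "x \<odot> y \<odot> (cinv y \<odot> cinv x) = x \<odot> (y \<odot> cinv y \<odot> cinv x)"
    by (simp add: clif_mult_assoc)
  then show "x \<odot> y \<odot> (cinv y \<odot> cinv x) = clif_one"
    using cinv_inverse[OF x] cinv_inverse[OF y] by (simp add: clif_one_mult)
  have "cinv y \<odot> cinv x \<odot> (x \<odot> y) = cinv y \<odot> (cinv x \<odot> x \<odot> y)"
    by (simp add: clif_mult_assoc)
  then show "cinv y \<odot> cinv x \<odot> (x \<odot> y) = clif_one"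
    using cinv_inverse[OF x] cinv_inverse[OF y] invertible_carrier[OF y] by (simp add: clif_one_mult)
qed simp_all

lemma invertible_rev: "invertible x \<Longrightarrow> invertible (clif_rev x)"
  by (rule invertibleI[of _ "clif_rev (cinv x)"])
    (simp_all add: cinv_inverse invertible_carrier flip: clif_rev_mult)

lemma invertible_hat: "invertible x \<Longrightarrow> invertible (clif_hat x)"
  by (rule invertibleI[of _ "clif_hat (cinv x)"])
    (simp_all add: cinv_inverse invertible_carrier flip: clif_hat_mult)

lemma invertible_scale: "k \<noteq> 0 \<Longrightarrow> invertible x \<Longrightarrow> invertible (clif_scale k x)"
  by (rule invertibleI[of _ "clif_scale (1 / k) (cinv x)"])
    (simp_all add: cinv_inverse invertible_carrier clif_mult_scale_left clif_mult_scale_right clif_scale_scale)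

lemma invertible_cinv: "invertible x \<Longrightarrow> invertible (cinv x)"
  by (rule invertibleI[of _ x]) (simp_all add: cinv_inverse invertible_carrier)

lemma cinv_hat: "invertible x \<Longrightarrow> cinv (clif_hat x) = clif_hat (cinv x)"
  by (rule cinv_unique[symmetric]) (simp_all add: invertible_hat cinv_inverse flip: clif_hat_mult)

lemma cinv_minus: "invertible x \<Longrightarrow> cinv (- x) = - cinv x"
  by (rule cinv_unique[symmetric])
    (simp_all add: cinv_inverse clif_mult_minus_left clif_mult_minus_right
      invertible_scale[of "-1", unfolded clif_scale_minus_one])

lemma cinv_even: "invertible x \<Longrightarrow> x \<in> clif_even n \<Longrightarrow> cinv x \<in> clif_even n"
  by (simp add: clif_even_iff_hat cinv_inverse flip: cinv_hat)

lemma cinv_odd: "invertible x \<Longrightarrow> x \<in> clif_odd n \<Longrightarrow> cinv x \<in> clif_odd n"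
  by (simp add: clif_odd_iff_hat cinv_inverse flip: cinv_hat cinv_minus)

end

section \<open>The centre\<close>

definition clif_pseudoscalar :: "nat \<Rightarrow> 'a::field clif" where
  "clif_pseudoscalar n = (\<lambda>A. if A = {..<n} then 1 else 0)"

definition clif_one_I :: "nat \<Rightarrow> 'a::field \<Rightarrow> 'a \<Rightarrow> 'a clif" where
  "clif_one_I n a b = (\<lambda>A. if A = {} then a else if A = {..<n} then b else 0)"

lemma clif_carrier_pseudoscalar [simp]: "clif_pseudoscalar n \<in> clif_carrier n"
  and clif_carrier_one_I [simp]: "clif_one_I n a b \<in> clif_carrier n"
  by (simp_all add: clif_carrier_def clif_pseudoscalar_def clif_one_I_def)

locale clifford_pm = clifford +
  assumes eta_pm: "eta i = 1 \<or> eta i = -1"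
    and dim_pos: "1 \<le> n"
begin

abbreviation I :: "'a clif" where "I \<equiv> clif_pseudoscalar n"

abbreviation one_I :: "'a \<Rightarrow> 'a \<Rightarrow> 'a clif" where "one_I \<equiv> clif_one_I n"

definition pseudo_sq :: 'a where "pseudo_sq = blade_coeff eta {..<n} {..<n}"

lemma lessThan_neq_empty: "{..<n} \<noteq> {}"
  using dim_pos lessThan_empty_iff[of n] by simp

lemma mult_pseudoscalar_left:
  assumes C: "C \<subseteq> {..<n}"
  shows "(I \<odot> x) C = x (sym_diff {..<n} C) * blade_coeff eta {..<n} (sym_diff {..<n} C)"
proof -
  have "(I \<odot> x) C = (\<Sum>A\<in>Pow {..<n}. if A = {..<n} then x (sym_diff A C) * blade_coeff eta A (sym_diff A C) else 0)"
    unfolding clif_mult_apply[OF C] by (intro sum.cong refl) (simp add: clif_pseudoscalar_def)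
  then show ?thesis by simp
qed

lemma mult_pseudoscalar_right:
  assumes C: "C \<subseteq> {..<n}"
  shows "(x \<odot> I) C = x (sym_diff {..<n} C) * blade_coeff eta (sym_diff {..<n} C) {..<n}"
proof -
  have "x A * I (sym_diff A C) * blade_coeff eta A (sym_diff A C) =
      (if A = sym_diff {..<n} C then x A * blade_coeff eta A {..<n} else 0)" for A
  proof (cases "A = sym_diff {..<n} C")
    case True
    then have "sym_diff A C = {..<n}" using C by blast
    then show ?thesis using True by (simp add: clif_pseudoscalar_def)
  next
    case False
    then have "sym_diff A C \<noteq> {..<n}" by blast
    then show ?thesis using False by (simp add: clif_pseudoscalar_def)
  qed
  then have "(x \<odot> I) C = (\<Sum>A\<in>Pow {..<n}. if A = sym_diff {..<n} C then x A * blade_coeff eta A {..<n} else 0)"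
    unfolding clif_mult_apply[OF C] by simp
  also have "\<dots> = x (sym_diff {..<n} C) * blade_coeff eta (sym_diff {..<n} C) {..<n}"
    using C by (subst sum.delta) auto
  finally show ?thesis .
qed

lemma blade_coeff_pseudoscalar_commute:
  assumes "odd n" "B \<subseteq> {..<n}"
  shows "blade_coeff eta {..<n} B = blade_coeff eta B {..<n}"
proof -
  obtain m where m: "n = 2 * m + 1" using assms(1) oddE by blast
  have int: "{..<n} \<inter> B = B" "B \<inter> {..<n} = B" using assms(2) by auto
  have "inversions {..<n} B + inversions B {..<n} + card B = n * card B"
    using inversions_swap[of "{..<n}" B] assms(2) int by (simp add: finite_subset)
  then have "inversions {..<n} B + inversions B {..<n} = 2 * (m * card B)"
    unfolding m by (simp add: algebra_simps)
  then have "(-1::'a) ^ inversions {..<n} B = (-1) ^ inversions B {..<n}"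
    by (intro neg_one_power_eq_if_even_add) simp
  then show ?thesis unfolding blade_coeff_eq int by simp
qed

lemma pseudoscalar_commute:
  assumes "odd n"
  shows "I \<odot> x = x \<odot> I"
proof
  fix C
  show "(I \<odot> x) C = (x \<odot> I) C"
  proof (cases "C \<subseteq> {..<n}")
    case True
    moreover have "sym_diff {..<n} C \<subseteq> {..<n}" using True by blast
    ultimately show ?thesis
      by (simp add: mult_pseudoscalar_left mult_pseudoscalar_right blade_coeff_pseudoscalar_commute[OF assms])
  qed (simp add: clif_mult_outside)
qed

lemma pseudoscalar_square: "I \<odot> I = clif_scale pseudo_sq clif_one"
proof
  fix C
  show "(I \<odot> I) C = clif_scale pseudo_sq clif_one C"
  proof (cases "C \<subseteq> {..<n}")
    case True
    moreover have "sym_diff {..<n} C = {..<n} \<longleftrightarrow> C = {}" using True by blast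
    ultimately show ?thesis
      using mult_pseudoscalar_left[OF True, of I]
      by (simp add: clif_pseudoscalar_def clif_scale_def clif_one_def pseudo_sq_def)
  qed (auto simp: clif_mult_outside clif_scale_def clif_one_def)
qed

lemma pseudo_sq_cases: "pseudo_sq = 1 \<or> pseudo_sq = -1"
proof -
  have "(\<Prod>i<n. eta i) * (\<Prod>i<n. eta i) = (\<Prod>i<n. eta i * eta i)"
    by (simp add: prod.distrib)
  also have "\<dots> = 1" using eta_pm by (intro prod.neutral) (metis mult_1 mult_minus1_right minus_minus)
  finally have "pseudo_sq * pseudo_sq = 1"
    unfolding pseudo_sq_def blade_coeff_eq by (simp add: algebra_simps flip: power_add)
  then have "(pseudo_sq - 1) * (pseudo_sq + 1) = 0" by (simp add: algebra_simps)
  then show ?thesis by (auto simp: eq_neg_iff_add_eq_0)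
qed

lemma pseudo_sq_neq_zero: "pseudo_sq \<noteq> 0"
  using pseudo_sq_cases by auto

lemma clif_hat_pseudoscalar: "clif_hat I = clif_scale ((-1) ^ n) I"
  by (simp add: fun_eq_iff clif_hat_def clif_pseudoscalar_def clif_scale_def)

lemma one_I_eq: "one_I a b = clif_scale a clif_one + clif_scale b I"
  using lessThan_neq_empty
  by (auto simp: fun_eq_iff clif_one_I_def clif_scale_def clif_one_def clif_pseudoscalar_def)

lemma one_I_eq_zero_iff: "one_I a b = 0 \<longleftrightarrow> a = 0 \<and> b = 0"
  using lessThan_neq_empty by (auto simp: fun_eq_iff clif_one_I_def)

lemma one_I_zero: "one_I a 0 = clif_scale a clif_one"
  by (simp add: fun_eq_iff clif_one_I_def clif_scale_def clif_one_def)

lemma clif_hat_one_I: "clif_hat (one_I a b) = one_I a ((-1) ^ n * b)"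
  and clif_rev_one_I: "clif_rev (one_I a b) = one_I a ((-1) ^ (n choose 2) * b)"
  and clif_scale_one_I: "clif_scale k (one_I a b) = one_I (k * a) (k * b)"
  and one_I_add: "one_I a b + one_I c d = one_I (a + c) (b + d)"
  and one_I_diff: "one_I a b - one_I c d = one_I (a - c) (b - d)"
  using lessThan_neq_empty
  by (simp_all add: fun_eq_iff clif_hat_def clif_rev_eq clif_scale_def clif_one_I_def binomial_eq_0)

lemma mult_one_I_left: "x \<in> clif_carrier n \<Longrightarrow> one_I a b \<odot> x = clif_scale a x + clif_scale b (I \<odot> x)"
  by (simp add: one_I_eq clif_mult_add_left clif_mult_scale_left clif_one_mult)

lemma one_I_mult: "one_I a b \<odot> one_I c d = one_I (a * c + pseudo_sq * b * d) (a * d + b * c)"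
proof -
  have I_mult: "I \<odot> one_I c d = clif_scale c I + clif_scale d (clif_scale pseudo_sq clif_one)"
    by (simp add: one_I_eq clif_mult_add_right clif_mult_scale_right pseudoscalar_square clif_mult_one)
  have "one_I a b \<odot> one_I c d = clif_scale a (one_I c d) + clif_scale b (I \<odot> one_I c d)"
    by (simp add: mult_one_I_left)
  also have "\<dots> = clif_scale a (clif_scale c clif_one + clif_scale d I) +
      clif_scale b (clif_scale c I + clif_scale d (clif_scale pseudo_sq clif_one))"
    by (simp only: I_mult, simp only: one_I_eq)
  also have "\<dots> = one_I (a * c + pseudo_sq * b * d) (a * d + b * c)"
    unfolding one_I_eq by (simp add: fun_eq_iff clif_scale_def algebra_simps)
  finally show ?thesis .
qed

lemma one_I_commute:
  assumes "even n \<longrightarrow> b = 0" "x \<in> clif_carrier n"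
  shows "one_I a b \<odot> x = x \<odot> one_I a b"
  using assms pseudoscalar_commute
  by (cases "odd n")
    (simp_all add: one_I_eq clif_mult_add_left clif_mult_add_right clif_mult_scale_left clif_mult_scale_right
      clif_one_mult clif_mult_one)

definition one_I_norm :: "'a \<Rightarrow> 'a \<Rightarrow> 'a" where
  "one_I_norm a b = a * a - pseudo_sq * b * b"

lemma one_I_mult_conj:
  "one_I a (-b) \<odot> one_I a b = clif_scale (one_I_norm a b) clif_one"
  "one_I a b \<odot> one_I a (-b) = clif_scale (one_I_norm a b) clif_one"
  by (simp_all add: one_I_mult one_I_norm_def flip: one_I_zero)

lemma invertible_one_I_iff: "invertible (one_I a b) \<longleftrightarrow> one_I_norm a b \<noteq> 0"
proof
  assume inv: "invertible (one_I a b)"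
  show "one_I_norm a b \<noteq> 0"
  proof
    assume "one_I_norm a b = 0"
    then have "one_I a (-b) \<odot> one_I a b = 0" by (simp add: one_I_mult_conj)
    then have "one_I a (-b) = 0 \<odot> cinv (one_I a b)" by (intro mult_cancel_right[OF inv]) simp_all
    then have "one_I a (-b) = 0" by simp
    then have "one_I a b = 0" by (simp add: one_I_eq_zero_iff)
    then show False using inv not_invertible_zero by simp
  qed
next
  assume "one_I_norm a b \<noteq> 0"
  then show "invertible (one_I a b)"
    by (intro invertibleI[of _ "clif_scale (1 / one_I_norm a b) (one_I a (-b))"])
      (simp_all add: clif_mult_scale_left clif_mult_scale_right one_I_mult_conj clif_scale_scale)
qed

lemma cinv_one_I: "one_I_norm a b \<noteq> 0 \<Longrightarrow> cinv (one_I a b) = clif_scale (1 / one_I_norm a b) (one_I a (-b))"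
  by (rule cinv_unique[symmetric])
    (simp_all add: invertible_one_I_iff clif_mult_scale_right one_I_mult_conj clif_scale_scale)

abbreviation Z :: "'a clif set" where "Z \<equiv> clif_Z n"

abbreviation Z_units :: "'a clif set" where "Z_units \<equiv> clif_units n eta (clif_Z n)"

lemma clif_Z_iff: "x \<in> Z \<longleftrightarrow> (\<exists>a b. x = one_I a b \<and> (even n \<longrightarrow> b = 0))"
proof
  assume x: "x \<in> Z"
  then have "x = one_I (x {}) (x {..<n})"
    by (auto simp: fun_eq_iff clif_one_I_def clif_Z_def)
  moreover have "even n \<longrightarrow> x {..<n} = 0"
    using x lessThan_neq_empty by (auto simp: clif_Z_def)
  ultimately show "\<exists>a b. x = one_I a b \<and> (even n \<longrightarrow> b = 0)" by blast
next
  assume "\<exists>a b. x = one_I a b \<and> (even n \<longrightarrow> b = 0)"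
  then obtain a b where x: "x = one_I a b" and b: "even n \<longrightarrow> b = 0" by blast
  have "\<forall>A. x A \<noteq> 0 \<longrightarrow> A = {} \<or> (odd n \<and> A = {..<n})"
    using b by (auto simp: x clif_one_I_def)
  then show "x \<in> Z" by (simp add: clif_Z_def x)
qed

lemma one_I_in_Z: "(even n \<longrightarrow> b = 0) \<Longrightarrow> one_I a b \<in> Z"
  using clif_Z_iff by blast

lemma clif_Z_E:
  assumes "z \<in> Z"
  obtains a b where "z = one_I a b" "even n \<longrightarrow> b = 0"
  using assms clif_Z_iff by blast

lemma Z_commute: "z \<in> Z \<Longrightarrow> x \<in> clif_carrier n \<Longrightarrow> z \<odot> x = x \<odot> z"
  using clif_Z_iff one_I_commute by metis

lemma Z_mult: "z \<in> Z \<Longrightarrow> w \<in> Z \<Longrightarrow> z \<odot> w \<in> Z"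
  by (auto elim!: clif_Z_E intro!: one_I_in_Z simp: one_I_mult)

lemma Z_rev: "z \<in> Z \<Longrightarrow> clif_rev z \<in> Z"
  and Z_hat: "z \<in> Z \<Longrightarrow> clif_hat z \<in> Z"
  and Z_scale: "z \<in> Z \<Longrightarrow> clif_scale k z \<in> Z"
  and Z_add: "z \<in> Z \<Longrightarrow> w \<in> Z \<Longrightarrow> z + w \<in> Z"
  and Z_diff: "z \<in> Z \<Longrightarrow> w \<in> Z \<Longrightarrow> z - w \<in> Z"
  by (auto elim!: clif_Z_E intro!: one_I_in_Z
      simp: clif_rev_one_I clif_hat_one_I clif_scale_one_I one_I_add one_I_diff)

lemma Z_units_iff: "z \<in> Z_units \<longleftrightarrow> z \<in> Z \<and> invertible z"
  by (simp add: clif_units_def)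

lemma Z_units_one: "clif_one \<in> Z_units"
  using one_I_in_Z[of 0 1] invertible_one by (simp add: Z_units_iff one_I_zero)

lemma Z_units_mult: "z \<in> Z_units \<Longrightarrow> w \<in> Z_units \<Longrightarrow> z \<odot> w \<in> Z_units"
  and Z_units_rev: "z \<in> Z_units \<Longrightarrow> clif_rev z \<in> Z_units"
  and Z_units_hat: "z \<in> Z_units \<Longrightarrow> clif_hat z \<in> Z_units"
  by (simp_all add: Z_units_iff Z_mult Z_rev Z_hat invertible_mult invertible_rev invertible_hat)

lemma Z_units_cinv: "z \<in> Z_units \<Longrightarrow> cinv z \<in> Z_units"
  by (auto simp: Z_units_iff invertible_cinv invertible_one_I_iff cinv_one_I clif_scale_one_I
      elim!: clif_Z_E intro!: one_I_in_Z)

lemma Z_units_scale_iff: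
  assumes "k \<noteq> 0"
  shows "clif_scale k z \<in> Z_units \<longleftrightarrow> z \<in> Z_units"
proof
  assume "clif_scale k z \<in> Z_units"
  then have "clif_scale (1 / k) (clif_scale k z) \<in> Z_units"
    using assms by (simp add: Z_units_iff Z_scale invertible_scale)
  then show "z \<in> Z_units" using assms by (simp add: clif_scale_scale)
qed (use assms in \<open>simp add: Z_units_iff Z_scale invertible_scale\<close>)

section \<open>The groups P, A, B and Q\<close>

lemma Z_units_mult_transfer:
  assumes "x \<in> Z_units" "y \<in> Z_units" "u \<in> clif_carrier n" "x \<odot> u \<in> Z_units"
  shows "y \<odot> u \<in> Z_units"
proof -
  have "y \<odot> cinv x \<odot> (x \<odot> u) = y \<odot> (cinv x \<odot> x \<odot> u)" by (simp add: clif_mult_assoc)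
  also have "\<dots> = y \<odot> u"
    using assms(1,3) cinv_inverse[of x] by (simp add: Z_units_iff clif_one_mult)
  finally have "y \<odot> cinv x \<odot> (x \<odot> u) = y \<odot> u" .
  moreover have "y \<odot> cinv x \<odot> (x \<odot> u) \<in> Z_units"
    using assms by (simp add: Z_units_mult Z_units_cinv)
  ultimately show ?thesis by simp
qed

abbreviation parity_units :: "'a clif set" where
  "parity_units \<equiv> clif_units n eta (clif_even n) \<union> clif_units n eta (clif_odd n)"

abbreviation P :: "'a clif set" where "P \<equiv> clif_P n eta"

lemma clif_P_iff: "t \<in> P \<longleftrightarrow> (\<exists>w u. t = w \<odot> u \<and> w \<in> Z_units \<and> u \<in> parity_units)"
  unfolding clif_P_def by blast

lemma parity_units_invertible: "u \<in> parity_units \<Longrightarrow> invertible u"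
  by (auto simp: clif_units_def)

lemma parity_units_hat:
  assumes "u \<in> parity_units"
  obtains \<sigma> where "\<sigma> = 1 \<or> \<sigma> = -1" "clif_hat u = clif_scale \<sigma> u"
  using assms that[of 1] that[of "-1"]
  by (auto simp: clif_units_def clif_even_iff_hat clif_odd_iff_hat clif_scale_minus_one)

lemma P_invertible: "t \<in> P \<Longrightarrow> invertible t"
  using clif_P_iff parity_units_invertible Z_units_iff invertible_mult by metis

lemma P_rev_mult_self:
  assumes "t \<in> P"
  obtains x y u \<sigma> where "x \<in> Z_units" "y \<in> Z_units" "\<sigma> = 1 \<or> \<sigma> = -1"
    "clif_rev t \<odot> t = x \<odot> u" "clif_hat (clif_rev t) \<odot> t = clif_scale \<sigma> (y \<odot> u)"
    "invertible u" "clif_hat u = u" "clif_rev u = u"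
proof -
  obtain w v where t: "t = w \<odot> v" and w: "w \<in> Z_units" and v: "v \<in> parity_units"
    using assms clif_P_iff by blast
  obtain \<sigma> where \<sigma>: "\<sigma> = 1 \<or> \<sigma> = -1" and hat_v: "clif_hat v = clif_scale \<sigma> v"
    using parity_units_hat[OF v] by blast
  have v_carrier: "v \<in> clif_carrier n"
    using parity_units_invertible[OF v] invertible_carrier by blast
  have interchange: "r \<odot> w' \<odot> (w \<odot> v) = w' \<odot> w \<odot> (r \<odot> v)"
    if "w' \<in> Z" "r \<in> clif_carrier n" for w' r
  proof -
    have "r \<odot> w' \<odot> (w \<odot> v) = r \<odot> (w' \<odot> w) \<odot> v" by (simp add: clif_mult_assoc)
    also have "r \<odot> (w' \<odot> w) = w' \<odot> w \<odot> r"
      using Z_commute[OF Z_mult[OF that(1)] that(2)] w by (simp add: Z_units_iff)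
    finally show ?thesis by (simp add: clif_mult_assoc)
  qed
  let ?u = "clif_rev v \<odot> v"
  have hat_rev_v: "clif_hat (clif_rev v) = clif_scale \<sigma> (clif_rev v)"
    using hat_v by (simp add: clif_hat_rev clif_rev_scale)
  have rev_t: "clif_rev t \<odot> t = clif_rev w \<odot> w \<odot> ?u"
    unfolding t clif_rev_mult using w v_carrier by (intro interchange) (simp_all add: Z_units_iff Z_rev)
  have "clif_hat (clif_rev t) \<odot> t = clif_hat (clif_rev w) \<odot> w \<odot> (clif_hat (clif_rev v) \<odot> v)"
    unfolding t clif_rev_mult clif_hat_mult using w v_carrier
    by (intro interchange) (simp_all add: Z_units_iff Z_rev Z_hat)
  then have hat_rev_t: "clif_hat (clif_rev t) \<odot> t = clif_scale \<sigma> (clif_hat (clif_rev w) \<odot> w \<odot> ?u)"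
    by (simp add: hat_rev_v clif_mult_scale_left clif_mult_scale_right)
  have "clif_hat ?u = ?u"
    using \<sigma> by (auto simp: clif_hat_mult hat_rev_v hat_v clif_mult_scale_left clif_mult_scale_right clif_scale_scale)
  moreover have "clif_rev ?u = ?u" by (simp add: clif_rev_mult)
  moreover have "invertible ?u"
    using parity_units_invertible[OF v] by (simp add: invertible_mult invertible_rev)
  moreover have "clif_rev w \<odot> w \<in> Z_units" "clif_hat (clif_rev w) \<odot> w \<in> Z_units"
    using w by (simp_all add: Z_units_mult Z_units_rev Z_units_hat)
  ultimately show ?thesis using that \<sigma> rev_t hat_rev_t by blast
qed

lemma rev_mult_self_in_Z_units_iff:
  assumes "t \<in> P"
  shows "clif_rev t \<odot> t \<in> Z_units \<longleftrightarrow> clif_hat (clif_rev t) \<odot> t \<in> Z_units"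
proof -
  obtain x y u \<sigma> where xy: "x \<in> Z_units" "y \<in> Z_units" and \<sigma>: "\<sigma> = 1 \<or> \<sigma> = -1"
    and eqs: "clif_rev t \<odot> t = x \<odot> u" "clif_hat (clif_rev t) \<odot> t = clif_scale \<sigma> (y \<odot> u)"
    and u: "invertible u" "clif_hat u = u" "clif_rev u = u"
    by (rule P_rev_mult_self[OF assms])
  have "\<sigma> \<noteq> 0" using \<sigma> by auto
  then show ?thesis
    unfolding eqs Z_units_scale_iff[OF \<open>\<sigma> \<noteq> 0\<close>]
    using Z_units_mult_transfer[OF xy] Z_units_mult_transfer[OF xy(2,1)] invertible_carrier[OF u(1)] by blast
qed

lemma pseudoscalar_mult_flips_parity:
  assumes "odd n" "clif_hat x = clif_scale \<sigma> x" "\<sigma> \<noteq> 0" "clif_scale a x = clif_scale b (I \<odot> x)"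
  shows "clif_scale a x = 0"
proof -
  have "clif_hat I = clif_scale (-1) I" using assms(1) by (simp add: clif_hat_pseudoscalar)
  then have "clif_hat (clif_scale b (I \<odot> x)) = clif_scale (- \<sigma>) (clif_scale b (I \<odot> x))"
    using assms(2) by (simp add: clif_hat_scale clif_hat_mult clif_mult_scale_left clif_mult_scale_right
      clif_scale_scale mult_ac)
  moreover have "clif_hat (clif_scale a x) = clif_scale \<sigma> (clif_scale a x)"
    using assms(2) by (simp add: clif_hat_scale clif_scale_scale mult_ac)
  ultimately have "clif_scale \<sigma> (clif_scale a x) = clif_scale (- \<sigma>) (clif_scale a x)"
    using assms(4) by simp
  then show ?thesis using assms(3) by (simp add: fun_eq_iff clif_scale_def)
qed

lemma Z_nonunit_mult_parity_eq_zero: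
  assumes z: "z \<in> Z" "\<not> invertible z" and y: "y \<in> clif_carrier n" and x: "x = z \<odot> y"
    and parity: "clif_hat x = clif_scale \<sigma> x" "\<sigma> \<noteq> 0"
  shows "x = 0"
proof -
  obtain a b where z_eq: "z = one_I a b" and b: "even n \<longrightarrow> b = 0"
    using z(1) by (rule clif_Z_E)
  have norm: "one_I_norm a b = 0" using z(2) by (simp add: z_eq invertible_one_I_iff)
  have "one_I a (-b) \<odot> x = one_I a (-b) \<odot> one_I a b \<odot> y" by (simp add: x z_eq clif_mult_assoc)
  also have "\<dots> = 0" by (simp add: one_I_mult_conj norm)
  finally have "clif_scale a x + clif_scale (-b) (I \<odot> x) = 0" by (simp add: mult_one_I_left x)
  then have ax_bIx: "clif_scale a x = clif_scale b (I \<odot> x)"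
    by (simp add: fun_eq_iff clif_scale_def)
  show ?thesis
  proof (cases "a = 0")
    case True
    then have "b = 0" using norm pseudo_sq_neq_zero by (simp add: one_I_norm_def)
    with True show ?thesis by (simp add: x z_eq one_I_eq)
  next
    case False
    have "clif_scale a x = 0"
      using ax_bIx b pseudoscalar_mult_flips_parity[OF _ parity ax_bIx] by (cases "odd n") simp_all
    then show ?thesis using False by (simp add: fun_eq_iff clif_scale_def)
  qed
qed

lemma P_if_parity_mult_Z_unit:
  assumes t: "invertible t" and r: "r \<in> clif_even n \<or> r \<in> clif_odd n" and c: "r \<odot> t \<in> Z_units"
  shows "t \<in> P"
proof -
  have r_carrier: "r \<in> clif_carrier n" using r by (auto simp: clif_even_def clif_odd_def)
  have "invertible r"
    using mult_cancel_right[OF t r_carrier refl] invertible_mult[OF _ invertible_cinv[OF t]] c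
    by (metis Z_units_iff)
  have "t = cinv r \<odot> (r \<odot> t)"
    using mult_cancel_left[OF \<open>invertible r\<close> invertible_carrier[OF t] refl] .
  also have "\<dots> = r \<odot> t \<odot> cinv r"
    using Z_commute c cinv_inverse(1)[OF \<open>invertible r\<close>] by (simp add: Z_units_iff)
  finally have "t = r \<odot> t \<odot> cinv r" .
  moreover have "cinv r \<in> parity_units"
    using r cinv_even cinv_odd invertible_cinv[OF \<open>invertible r\<close>] \<open>invertible r\<close>
    by (auto simp: clif_units_def)
  ultimately show ?thesis using c clif_P_iff by blast
qed

lemma A_inter_B_subset_P:
  assumes t: "invertible t" and a: "clif_rev t \<odot> t \<in> Z_units" and b: "clif_hat (clif_rev t) \<odot> t \<in> Z_units"
  shows "t \<in> P"
proof -
  have t_carrier: "t \<in> clif_carrier n" using t invertible_carrier by blast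
  define r0 r1 where "r0 = clif_rev (clif_even_part t)" and "r1 = clif_rev (clif_odd_part t)"
  have r_carrier: "r0 \<in> clif_carrier n" "r1 \<in> clif_carrier n" using t_carrier by (simp_all add: r0_def r1_def)
  have hat_r: "clif_hat r0 = clif_scale 1 r0" "clif_hat r1 = clif_scale (-1) r1"
    by (simp_all add: r0_def r1_def clif_hat_rev clif_hat_even_part clif_hat_odd_part clif_rev_minus
      clif_scale_minus_one)
  have rev_t: "clif_rev t = r0 + r1"
    unfolding r0_def r1_def clif_rev_add[symmetric] clif_even_part_add_odd_part ..
  define g d where "g = r0 \<odot> t" and "d = r1 \<odot> t"
  have "clif_rev t \<odot> t = g + d"
    by (simp add: g_def d_def rev_t clif_mult_add_left)
  moreover have "clif_hat (clif_rev t) \<odot> t = g - d"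
    using hat_r by (simp add: g_def d_def rev_t clif_hat_add clif_scale_minus_one clif_mult_diff_left)
  ultimately have sum: "g + d \<in> Z" and diff: "g - d \<in> Z"
    using a b by (simp_all add: Z_units_iff)
  have "g = clif_scale (1/2) ((g + d) + (g - d))" "d = clif_scale (1/2) ((g + d) - (g - d))"
    by (simp_all add: fun_eq_iff clif_scale_def field_simps)
  then have g: "g \<in> Z" and d: "d \<in> Z"
    by (metis Z_scale Z_add sum diff, metis Z_scale Z_diff sum diff)
  have r0_eq: "r0 = g \<odot> cinv t" and r1_eq: "r1 = d \<odot> cinv t"
    using mult_cancel_right[OF t] r_carrier by (simp_all add: g_def d_def)
  have parity: "r0 \<in> clif_even n" "r1 \<in> clif_odd n"
    using r_carrier hat_r by (simp_all add: clif_even_iff_hat clif_odd_iff_hat clif_scale_minus_one)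
  consider "invertible g" | "invertible d" | "\<not> invertible g" "\<not> invertible d" by blast
  then show ?thesis
  proof cases
    case 1
    show ?thesis
      by (rule P_if_parity_mult_Z_unit[OF t, of r0]) (use parity g 1 in \<open>simp_all add: Z_units_iff flip: g_def\<close>)
  next
    case 2
    show ?thesis
      by (rule P_if_parity_mult_Z_unit[OF t, of r1]) (use parity d 2 in \<open>simp_all add: Z_units_iff flip: d_def\<close>)
  next
    case 3
    have "r0 = 0" "r1 = 0"
      using Z_nonunit_mult_parity_eq_zero[OF g 3(1) cinv_inverse(1)[OF t] r0_eq hat_r(1)]
        Z_nonunit_mult_parity_eq_zero[OF d 3(2) cinv_inverse(1)[OF t] r1_eq hat_r(2)] by simp_all
    then show ?thesis using a not_invertible_zero by (simp add: rev_t Z_units_iff)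
  qed
qed

lemma self_reverse_even_in_Z:
  assumes "n \<le> 3" "u \<in> clif_carrier n" "clif_hat u = u" "clif_rev u = u"
  shows "u \<in> Z"
  unfolding clif_Z_def
proof (intro CollectI conjI allI impI assms(2))
  fix A assume nz: "u A \<noteq> 0"
  have sub: "A \<subseteq> {..<n}" using assms(2) nz by (auto simp: clif_carrier_def)
  then have "card A \<le> 3" using assms(1) card_mono[OF finite_lessThan sub] by simp
  then have "card A \<in> {0, 1, 2, 3}" by auto
  moreover have "even (card A)"
    by (rule even_if_neg_one_power_mult_eq[OF _ nz]) (use fun_cong[OF assms(3), of A] in \<open>simp add: clif_hat_def\<close>)
  moreover have "even (card A choose 2)"
    by (rule even_if_neg_one_power_mult_eq[OF _ nz]) (use fun_cong[OF assms(4), of A] in \<open>simp add: clif_rev_eq\<close>)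
  ultimately have "card A = 0" by auto
  then show "A = {} \<or> odd n \<and> A = {..<n}" using finite_subset[OF sub] by simp
qed

lemma P_rev_mult_self_in_Z_units:
  assumes "n \<le> 3" "t \<in> P"
  shows "clif_rev t \<odot> t \<in> Z_units"
proof -
  obtain x y u \<sigma> where "x \<in> Z_units" "y \<in> Z_units" "\<sigma> = 1 \<or> \<sigma> = -1"
    "clif_rev t \<odot> t = x \<odot> u" "clif_hat (clif_rev t) \<odot> t = clif_scale \<sigma> (y \<odot> u)"
    and u: "invertible u" "clif_hat u = u" "clif_rev u = u"
    by (rule P_rev_mult_self[OF assms(2)])
  moreover have "u \<in> Z_units"
    using self_reverse_even_in_Z[OF assms(1) invertible_carrier[OF u(1)] u(2,3)] u(1) by (simp add: Z_units_iff)
  ultimately show ?thesis by (simp add: Z_units_mult)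
qed

lemma dim_4_counterexample:
  assumes "n = 4"
  shows "one_I 1 2 \<in> P" "clif_rev (one_I 1 2) \<odot> one_I 1 2 \<notin> Z"
proof -
  have "one_I_norm 1 2 \<noteq> 0" using pseudo_sq_cases by (auto simp: one_I_norm_def)
  moreover have "one_I 1 2 \<in> clif_even n"
    unfolding clif_even_iff_hat clif_hat_one_I using assms by simp
  ultimately have "one_I 1 2 \<in> parity_units"
    by (simp add: clif_units_def invertible_one_I_iff)
  then show "one_I 1 2 \<in> P"
    using Z_units_one clif_P_iff clif_one_mult[OF clif_carrier_one_I] by metis
  have "clif_rev (one_I 1 2) \<odot> one_I 1 2 = one_I (1 + 4 * pseudo_sq) 4"
    unfolding clif_rev_one_I one_I_mult using assms by (simp add: choose_two)
  moreover have "one_I (1 + 4 * pseudo_sq) 4 \<noteq> one_I a 0" for a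
  proof
    assume "one_I (1 + 4 * pseudo_sq) 4 = one_I a 0"
    then have "one_I (1 + 4 * pseudo_sq) 4 - one_I a 0 = 0" by simp
    then have "one_I (1 + 4 * pseudo_sq - a) (4 - 0) = 0" by (simp only: one_I_diff)
    then show False by (simp add: one_I_eq_zero_iff)
  qed
  moreover have "even n" using assms by simp
  ultimately show "clif_rev (one_I 1 2) \<odot> one_I 1 2 \<notin> Z"
    by (auto simp: clif_Z_iff)
qed

lemma clif_A_iff: "t \<in> clif_A n eta \<longleftrightarrow> invertible t \<and> clif_rev t \<odot> t \<in> Z_units"
  and clif_B_iff: "t \<in> clif_B n eta \<longleftrightarrow> invertible t \<and> clif_hat (clif_rev t) \<odot> t \<in> Z_units"
  and clif_Q_iff: "t \<in> clif_Q n eta \<longleftrightarrow> t \<in> P \<and> clif_rev t \<odot> t \<in> Z_units"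
  by (auto simp: clif_A_def clif_B_def clif_Q_def clif_units_def invertible_carrier)

lemma clif_groups_relations:
  "clif_Q n eta = clif_A n eta \<inter> P \<and>
   clif_A n eta \<inter> P = clif_B n eta \<inter> P \<and>
   clif_B n eta \<inter> P = clif_A n eta \<inter> clif_B n eta \<and>
   (n \<le> 3 \<longrightarrow> clif_Q n eta = P) \<and>
   (n = 4 \<longrightarrow> clif_Q n eta \<noteq> P \<and> clif_A n eta \<noteq> P)"
proof (intro conjI impI)
  show "clif_Q n eta = clif_A n eta \<inter> P"
    using clif_A_iff clif_Q_iff P_invertible by blast
  show "clif_A n eta \<inter> P = clif_B n eta \<inter> P"
    using clif_A_iff clif_B_iff rev_mult_self_in_Z_units_iff by blast
  show "clif_B n eta \<inter> P = clif_A n eta \<inter> clif_B n eta"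
    using clif_A_iff clif_B_iff P_invertible rev_mult_self_in_Z_units_iff A_inter_B_subset_P by blast
  show "n \<le> 3 \<Longrightarrow> clif_Q n eta = P"
    using clif_Q_iff P_rev_mult_self_in_Z_units by blast
  assume "n = 4"
  then show "clif_Q n eta \<noteq> P" "clif_A n eta \<noteq> P"
    using dim_4_counterexample clif_Q_iff clif_A_iff Z_units_iff by blast+
qed

end

theorem mainTheorem9:
  fixes n :: nat
  assumes "n \<ge> 2"
  shows
   "(\<forall>p q. p + q = n \<longrightarrow>
      clif_Q n (real_sig p) = clif_A n (real_sig p) \<inter> clif_P n (real_sig p) \<and>
      clif_A n (real_sig p) \<inter> clif_P n (real_sig p) = clif_B n (real_sig p) \<inter> clif_P n (real_sig p) \<and>
      clif_B n (real_sig p) \<inter> clif_P n (real_sig p) = clif_A n (real_sig p) \<inter> clif_B n (real_sig p) \<and>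
      (n \<le> 3 \<longrightarrow> clif_Q n (real_sig p) = clif_P n (real_sig p)) \<and>
      (n = 4 \<longrightarrow> clif_Q n (real_sig p) \<noteq> clif_P n (real_sig p) \<and>
                 clif_A n (real_sig p) \<noteq> clif_P n (real_sig p)))
    \<and>
    (let eta = (\<lambda>_. 1 :: complex) in
      clif_Q n eta = clif_A n eta \<inter> clif_P n eta \<and>
      clif_A n eta \<inter> clif_P n eta = clif_B n eta \<inter> clif_P n eta \<and>
      clif_B n eta \<inter> clif_P n eta = clif_A n eta \<inter> clif_B n eta \<and>
      (n \<le> 3 \<longrightarrow> clif_Q n eta = clif_P n eta) \<and>
      (n = 4 \<longrightarrow> clif_Q n eta \<noteq> clif_P n eta \<and> clif_A n eta \<noteq> clif_P n eta))"
proof -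
  have "clifford_pm n (real_sig p)" for p
    using assms by unfold_locales (auto simp: real_sig_def)
  moreover have "clifford_pm n (\<lambda>_. 1 :: complex)"
    using assms by unfold_locales auto
  ultimately show ?thesis
    unfolding Let_def
    by (intro conjI[OF allI[OF allI[OF impI]]] clifford_pm.clif_groups_relations)
qed

end
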